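(* For all integers $k,\ell\ge 0$, every blowup $G$ of $F_{k,\ell}$ satisfies $\chi(G)\le\lceil\frac54\omega(G)\rceil$.
   Context: For integers $k,\ell\ge 0$, $F_{k,\ell}$ is the graph whose vertex set is partitioned into $A,B,U,W,\{x,y,z\}$ where: $A=\{a_0,\dots,a_k\}$ is a clique, $U=\{u_1,\dots,u_k\}$ is a stable set, and the only edges between $A$ and $U$ are $a_iu_i$ ($1\le i\le k$); $B=\{b_0,\dots,b_\ell\}$ is a clique, $W=\{w_1,\dots,w_\ell\}$ is a stable set, and the only edges between $B$ and $W$ are $b_jw_j$ ($1\le j\le\ell$); $N(x)=A\cup U\cup W\cup\{y\}$, $N(y)=B\cup U\cup W\cup\{x\}$, $N(z)=A\cup B$. A blowup of $H$ is any graph whose vertex set can be partitioned into $|V(H)|$ (not necessarily non-empty) cliques $Q_v$, with $Q_u$ complete to $Q_v$ if $uv\in E(H)$ and no edges between them otherwise. *)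

theory Defs
  imports Complex_Main
begin

text \<open>Finite graphs are given by a finite vertex set V and an adjacency relation E;
  only pairs of distinct vertices of V are relevant.\<close>

definition is_coloring :: "'v set \<Rightarrow> ('v \<Rightarrow> 'v \<Rightarrow> bool) \<Rightarrow> nat \<Rightarrow> ('v \<Rightarrow> nat) \<Rightarrow> bool" where
  "is_coloring V E n c \<longleftrightarrow>
     (\<forall>v\<in>V. c v < n) \<and> (\<forall>u\<in>V. \<forall>v\<in>V. u \<noteq> v \<longrightarrow> E u v \<longrightarrow> c u \<noteq> c v)"

definition chromatic_number :: "'v set \<Rightarrow> ('v \<Rightarrow> 'v \<Rightarrow> bool) \<Rightarrow> nat" where
  "chromatic_number V E = (LEAST n. \<exists>c. is_coloring V E n c)"

definition is_clique :: "'v set \<Rightarrow> ('v \<Rightarrow> 'v \<Rightarrow> bool) \<Rightarrow> 'v set \<Rightarrow> bool" where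
  "is_clique V E Q \<longleftrightarrow> Q \<subseteq> V \<and> (\<forall>u\<in>Q. \<forall>v\<in>Q. u \<noteq> v \<longrightarrow> E u v)"

definition clique_number :: "'v set \<Rightarrow> ('v \<Rightarrow> 'v \<Rightarrow> bool) \<Rightarrow> nat" where
  "clique_number V E = Max (card ` {Q. is_clique V E Q})"

text \<open>Blowup: V is partitioned into (possibly empty) cliques Q_h = f^{-1}(h), h in V(H);
  Q_h complete to Q_h' if hh' is an edge of H, anticomplete otherwise.\<close>

definition is_blowup :: "'v set \<Rightarrow> ('v \<Rightarrow> 'v \<Rightarrow> bool) \<Rightarrow> 'h set \<Rightarrow> ('h \<Rightarrow> 'h \<Rightarrow> bool) \<Rightarrow> bool" where
  "is_blowup V E VH EH \<longleftrightarrow>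
     (\<exists>f. (\<forall>v\<in>V. f v \<in> VH) \<and>
          (\<forall>u\<in>V. \<forall>v\<in>V. u \<noteq> v \<longrightarrow> (E u v \<longleftrightarrow> (f u = f v \<or> EH (f u) (f v)))))"

datatype fvert = VA nat | VU nat | VB nat | VW nat | VX | VY | VZ

definition F_verts :: "nat \<Rightarrow> nat \<Rightarrow> fvert set" where
  "F_verts k l = VA ` {0..k} \<union> VU ` {1..k} \<union> VB ` {0..l} \<union> VW ` {1..l} \<union> {VX, VY, VZ}"

fun F_adj0 :: "fvert \<Rightarrow> fvert \<Rightarrow> bool" where
  "F_adj0 (VA i) (VA j) = (i \<noteq> j)"
| "F_adj0 (VA i) (VU j) = (i = j)"
| "F_adj0 (VB i) (VB j) = (i \<noteq> j)"
| "F_adj0 (VB i) (VW j) = (i = j)"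
| "F_adj0 VX (VA _) = True"
| "F_adj0 VX (VU _) = True"
| "F_adj0 VX (VW _) = True"
| "F_adj0 VX VY = True"
| "F_adj0 VY (VB _) = True"
| "F_adj0 VY (VU _) = True"
| "F_adj0 VY (VW _) = True"
| "F_adj0 VZ (VA _) = True"
| "F_adj0 VZ (VB _) = True"
| "F_adj0 _ _ = False"

definition F_edge :: "nat \<Rightarrow> nat \<Rightarrow> fvert \<Rightarrow> fvert \<Rightarrow> bool" where
  "F_edge k l u v \<longleftrightarrow> u \<in> F_verts k l \<and> v \<in> F_verts k l \<and> (F_adj0 u v \<or> F_adj0 v u)"

end

theory Submission
  imports Defs
begin

text \<open>A blowup of H whose clique Q_h has q(h) vertices can be coloured with N colours as soon as
  every vertex h of H gets a set of q(h) colours out of N, adjacent vertices getting disjoint sets.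
  For F_{k,l} take N = \<lceil>5\<omega>/4\<rceil> and d = N - \<omega>, so \<omega> \<le> 4d. Contracting the cliques A and B
  leaves the pentagon Z A X Y B, which is coloured by arcs of a cycle (it has fractional chromatic
  number 5/2). Since A_i is not adjacent to Y, it may reuse min(a_i, Y) - d colours of Y, and
  B_j likewise colours of X; this frees enough colours for the pendant vertices U_i (adjacent to
  A_i, X, Y) and W_j. The shared colours fit into Y because Y (min(a, Y) - d) \<le> (Y - d) a and
  (Y - d) \<omega> \<le> Y^2, the latter by AM-GM from \<omega> \<le> 4d.\<close>

section \<open>Weighted colourings of blowups\<close>

definition is_weighted_coloring ::
  "'h set \<Rightarrow> ('h \<Rightarrow> 'h \<Rightarrow> bool) \<Rightarrow> nat \<Rightarrow> ('h \<Rightarrow> nat) \<Rightarrow> ('h \<Rightarrow> nat set) \<Rightarrow> bool" where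
  "is_weighted_coloring VH EH N q C \<longleftrightarrow>
     (\<forall>h\<in>VH. C h \<subseteq> {..<N} \<and> q h \<le> card (C h)) \<and>
     (\<forall>h\<in>VH. \<forall>h'\<in>VH. h \<noteq> h' \<longrightarrow> EH h h' \<longrightarrow> C h \<inter> C h' = {})"

lemma blowup_clique_weight_le:
  assumes "finite V" "finite VH"
    and blowup: "\<forall>u\<in>V. \<forall>v\<in>V. u \<noteq> v \<longrightarrow> (E u v \<longleftrightarrow> (f u = f v \<or> EH (f u) (f v)))"
    and "is_clique VH EH K"
  shows "(\<Sum>h\<in>K. card {v\<in>V. f v = h}) \<le> clique_number V E"
proof -
  let ?Q = "\<Union>h\<in>K. {v\<in>V. f v = h}"
  have "finite K" using assms(2,4) unfolding is_clique_def by (auto intro: finite_subset)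
  then have "card ?Q = (\<Sum>h\<in>K. card {v\<in>V. f v = h})"
    by (rule card_UN_disjoint) (use assms in auto)
  moreover have "is_clique V E ?Q"
    using blowup \<open>is_clique VH EH K\<close> unfolding is_clique_def by auto
  moreover have "finite {Q. is_clique V E Q}"
    using \<open>finite V\<close> by (rule rev_finite_subset[OF finite_Pow_iff[THEN iffD2]]) (auto simp: is_clique_def)
  ultimately show ?thesis
    unfolding clique_number_def by (metis (mono_tags) Max_ge finite_imageI image_eqI mem_Collect_eq)
qed

lemma blowup_chromatic_number_le:
  assumes "finite V"
    and fV: "\<forall>v\<in>V. f v \<in> VH"
    and blowup: "\<forall>u\<in>V. \<forall>v\<in>V. u \<noteq> v \<longrightarrow> (E u v \<longleftrightarrow> (f u = f v \<or> EH (f u) (f v)))"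
    and C: "is_weighted_coloring VH EH N (\<lambda>h. card {v\<in>V. f v = h}) C"
  shows "chromatic_number V E \<le> N"
proof -
  have "\<exists>g. g ` {v\<in>V. f v = h} \<subseteq> C h \<and> inj_on g {v\<in>V. f v = h}" if "h \<in> VH" for h
    using C that \<open>finite V\<close> unfolding is_weighted_coloring_def
    by (intro card_le_inj) (auto intro: finite_subset)
  then obtain g where g: "\<And>h. h \<in> VH \<Longrightarrow> g h ` {v\<in>V. f v = h} \<subseteq> C h \<and> inj_on (g h) {v\<in>V. f v = h}"
    by metis
  define c where "c v = g (f v) v" for v
  have c: "c v \<in> C (f v)" if "v \<in> V" for v
    using g[of "f v"] fV that unfolding c_def by auto
  have "is_coloring V E N c"
    unfolding is_coloring_def
  proof (intro conjI ballI impI)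
    fix v assume "v \<in> V"
    then show "c v < N" using c C fV unfolding is_weighted_coloring_def by blast
  next
    fix u v assume uv: "u \<in> V" "v \<in> V" "u \<noteq> v" "E u v"
    show "c u \<noteq> c v"
    proof (cases "f u = f v")
      case True
      then show ?thesis
        using g[of "f v"] fV uv unfolding c_def by (auto dest: inj_onD)
    next
      case False
      then have "C (f u) \<inter> C (f v) = {}"
        using C fV blowup uv unfolding is_weighted_coloring_def by blast
      then show ?thesis using c uv by (metis disjoint_iff)
    qed
  qed
  then show ?thesis
    unfolding chromatic_number_def by (intro Least_le) blast
qed

section \<open>Choosing sets of colours\<close>

lemma obtain_disjoint_subsets:
  fixes n :: "'i \<Rightarrow> nat"
  assumes "finite I" "finite S" "sum n I \<le> card S"
  obtains P where "\<And>i. i \<in> I \<Longrightarrow> P i \<subseteq> S \<and> card (P i) = n i"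
    and "\<And>i j. i \<in> I \<Longrightarrow> j \<in> I \<Longrightarrow> i \<noteq> j \<Longrightarrow> P i \<inter> P j = {}"
proof -
  have "\<exists>P. (\<forall>i\<in>I. P i \<subseteq> S \<and> card (P i) = n i) \<and> (\<forall>i\<in>I. \<forall>j\<in>I. i \<noteq> j \<longrightarrow> P i \<inter> P j = {})"
    using assms
  proof (induction I arbitrary: S rule: finite_induct)
    case empty
    then show ?case by auto
  next
    case (insert i I)
    have "n i \<le> card S" using insert by simp
    then obtain Si where Si: "Si \<subseteq> S" "card Si = n i" by (rule obtain_subset_with_card_n)
    have "sum n I \<le> card (S - Si)"
      using insert Si by (simp add: card_Diff_subset finite_subset)
    with insert.IH[of "S - Si"] insert.prems(1)
    obtain P where P: "\<forall>j\<in>I. P j \<subseteq> S - Si \<and> card (P j) = n j"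
      and "\<forall>j\<in>I. \<forall>j'\<in>I. j \<noteq> j' \<longrightarrow> P j \<inter> P j' = {}"
      by auto
    moreover have "P j \<inter> Si = {}" if "j \<in> I" for j
      using P that by blast
    ultimately show ?case
      using Si insert.hyps(2) by (intro exI[of _ "P(i := Si)"]) auto
  qed
  then obtain P where "\<forall>i\<in>I. P i \<subseteq> S \<and> card (P i) = n i"
    and "\<forall>i\<in>I. \<forall>j\<in>I. i \<noteq> j \<longrightarrow> P i \<inter> P j = {}"
    by blast
  then show thesis by (intro that[of P]) auto
qed

lemma obtain_disjoint_subsets_overlapping:
  fixes a r :: "'i \<Rightarrow> nat"
  assumes "finite I" "finite R" "\<And>i. i \<in> I \<Longrightarrow> r i \<le> a i"
    and "sum r I \<le> card (R \<inter> Y)" "sum a I \<le> card R"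
  obtains P where "\<And>i. i \<in> I \<Longrightarrow> P i \<subseteq> R \<and> card (P i) = a i \<and> card (P i - Y) \<le> a i - r i"
    and "\<And>i j. i \<in> I \<Longrightarrow> j \<in> I \<Longrightarrow> i \<noteq> j \<Longrightarrow> P i \<inter> P j = {}"
proof -
  obtain Q where Q: "Q \<subseteq> R \<inter> Y" "card Q = sum r I" "finite Q"
    using assms(4) by (rule obtain_subset_with_card_n)
  have "sum r I \<le> card Q" using Q(2) by simp
  then obtain P1 where P1: "\<And>i. i \<in> I \<Longrightarrow> P1 i \<subseteq> Q \<and> card (P1 i) = r i"
    and P1_disj: "\<And>i j. i \<in> I \<Longrightarrow> j \<in> I \<Longrightarrow> i \<noteq> j \<Longrightarrow> P1 i \<inter> P1 j = {}"
    by (rule obtain_disjoint_subsets[OF assms(1) Q(3)]) blast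
  have "sum (\<lambda>i. a i - r i) I = sum a I - sum r I"
    using assms(3) by (rule sum_subtractf_nat)
  also have "\<dots> \<le> card (R - Q)"
    using Q assms(5) by (simp add: card_Diff_subset)
  finally obtain P2 where P2: "\<And>i. i \<in> I \<Longrightarrow> P2 i \<subseteq> R - Q \<and> card (P2 i) = a i - r i"
    and P2_disj: "\<And>i j. i \<in> I \<Longrightarrow> j \<in> I \<Longrightarrow> i \<noteq> j \<Longrightarrow> P2 i \<inter> P2 j = {}"
    by (rule obtain_disjoint_subsets[OF assms(1) finite_Diff[OF assms(2)]]) blast
  show thesis
  proof (rule that[of "\<lambda>i. P1 i \<union> P2 i"])
    fix i assume i: "i \<in> I"
    have fin: "finite (P1 i)" "finite (P2 i)"
      using P1[OF i] P2[OF i] Q(3) assms(2) by (auto intro: finite_subset)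
    have "P1 i \<inter> P2 i = {}" using P1[OF i] P2[OF i] by blast
    then have "card (P1 i \<union> P2 i) = a i"
      using card_Un_disjoint[OF fin] P1[OF i] P2[OF i] assms(3)[OF i] by simp
    moreover have "card (P1 i \<union> P2 i - Y) \<le> card (P2 i)"
      using P1[OF i] Q(1) fin by (intro card_mono) auto
    ultimately show "P1 i \<union> P2 i \<subseteq> R \<and> card (P1 i \<union> P2 i) = a i \<and> card (P1 i \<union> P2 i - Y) \<le> a i - r i"
      using P1[OF i] P2[OF i] Q(1) by auto
  next
    fix i j assume "i \<in> I" "j \<in> I" "i \<noteq> j"
    then show "(P1 i \<union> P2 i) \<inter> (P1 j \<union> P2 j) = {}"
      using P1 P2 P1_disj P2_disj by blast
  qed
qed

lemma card_Un_le_card_Diff: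
  assumes "D \<subseteq> B \<union> C"
  shows "card (P \<union> B \<union> C) \<le> card (P - D) + card B + card C"
proof -
  have "P \<union> B \<union> C = (P - D) \<union> B \<union> C" using assms by blast
  also have "card \<dots> \<le> card ((P - D) \<union> B) + card C" by (rule card_Un_le)
  also have "\<dots> \<le> card (P - D) + card B + card C" using card_Un_le by simp
  finally show ?thesis .
qed

lemma obtain_avoiding_subsets:
  assumes "\<And>i. i \<in> I \<Longrightarrow> finite (M i)" "\<And>i. i \<in> I \<Longrightarrow> card (M i) + n i \<le> N"
  obtains U where "\<And>i. i \<in> I \<Longrightarrow> U i \<subseteq> {..<N} \<and> U i \<inter> M i = {} \<and> card (U i) = n i"
proof -
  have ex: "\<exists>U. U \<subseteq> {..<N} - M i \<and> card U = n i" if "i \<in> I" for i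
  proof -
    have "n i \<le> card {..<N} - card (M i)" using assms(2)[OF that] by simp
    also have "\<dots> \<le> card ({..<N} - M i)" using assms(1)[OF that] by (rule diff_card_le_card_Diff)
    finally show ?thesis by (meson obtain_subset_with_card_n)
  qed
  define U where "U i = (SOME U. U \<subseteq> {..<N} - M i \<and> card U = n i)" for i
  have "U i \<subseteq> {..<N} - M i \<and> card (U i) = n i" if "i \<in> I" for i
    unfolding U_def using ex[OF that] by (rule someI_ex)
  then show thesis by (intro that[of U]) blast
qed

section \<open>Set colourings of the pentagon\<close>

definition cyclic_interval :: "nat \<Rightarrow> nat \<Rightarrow> nat \<Rightarrow> nat set" where
  "cyclic_interval T s g = (\<lambda>j. (s + j) mod T) ` {..<g}"

lemma mod_eq_imp_eq_nat:
  fixes x y T :: nat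
  assumes "x \<le> y" "y < x + T" "x mod T = y mod T"
  shows "x = y"
proof -
  obtain s where "y = x + T * s"
    using assms(1,3) by (metis mod_eq_nat1E)
  with assms(2) show ?thesis by (cases s) auto
qed

lemma card_cyclic_interval:
  assumes "g \<le> T"
  shows "card (cyclic_interval T s g) = g"
proof -
  have "inj_on (\<lambda>j. (s + j) mod T) {..<g}"
  proof (rule inj_onI)
    fix i j assume "i \<in> {..<g}" "j \<in> {..<g}" "(s + i) mod T = (s + j) mod T"
    then show "i = j"
      using mod_eq_imp_eq_nat[of "s + i" "s + j" T] mod_eq_imp_eq_nat[of "s + j" "s + i" T] assms
      by (cases "i \<le> j") auto
  qed
  then show ?thesis unfolding cyclic_interval_def by (simp add: card_image)
qed

lemma cyclic_interval_subset:
  assumes "g \<le> T"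
  shows "cyclic_interval T s g \<subseteq> {..<T}"
  using assms unfolding cyclic_interval_def by auto

lemma disjoint_cyclic_intervals:
  assumes "s + g \<le> s'" "s' + g' \<le> s + T"
  shows "cyclic_interval T s g \<inter> cyclic_interval T s' g' = {}"
proof -
  have "(s + i) mod T \<noteq> (s' + j) mod T" if "i < g" "j < g'" for i j
    using that assms mod_eq_imp_eq_nat[of "s + i" "s' + j" T] by linarith
  then show ?thesis unfolding cyclic_interval_def by auto
qed

lemma cyclic_interval_shift: "cyclic_interval T (T + s) g = cyclic_interval T s g"
  unfolding cyclic_interval_def by (simp add: add.assoc)

lemma pentagon_set_coloring:
  fixes T g1 g2 g3 g4 g5 :: nat
  assumes "g1 + g2 \<le> T" "g2 + g3 \<le> T" "g3 + g4 \<le> T" "g4 + g5 \<le> T" "g5 + g1 \<le> T"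
    and "g1 + g2 + g3 + g4 + g5 \<le> 2 * T"
  obtains S1 S2 S3 S4 S5 where
    "S1 \<subseteq> {..<T}" "S2 \<subseteq> {..<T}" "S3 \<subseteq> {..<T}" "S4 \<subseteq> {..<T}" "S5 \<subseteq> {..<T}"
    "card S1 = g1" "card S2 = g2" "card S3 = g3" "card S4 = g4" "card S5 = g5"
    "S1 \<inter> S2 = {}" "S2 \<inter> S3 = {}" "S3 \<inter> S4 = {}" "S4 \<inter> S5 = {}" "S5 \<inter> S1 = {}"
proof -
  \<comment> \<open>Arcs of a cycle of length T: S1, S2, S3 consecutive from 0, then S4, possibly wrapping
    around past T, and finally S5, which has to fit between the ends of S4 and of the cycle.\<close>
  define s4 where "s4 = max (g1 + g2 + g3) (g1 + g5)"
  define s5 where "s5 = max g1 (s4 + g4 - T)"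
  let ?S = "cyclic_interval T"
  have "?S 0 g1 \<inter> ?S g1 g2 = {}" "?S g1 g2 \<inter> ?S (g1 + g2) g3 = {}"
    "?S (g1 + g2) g3 \<inter> ?S s4 g4 = {}" "?S s4 g4 \<inter> ?S (T + s5) g5 = {}" "?S 0 g1 \<inter> ?S s5 g5 = {}"
    using assms by (intro disjoint_cyclic_intervals; auto simp: s4_def s5_def max_def)+
  moreover have "g1 \<le> T" "g2 \<le> T" "g3 \<le> T" "g4 \<le> T" "g5 \<le> T" using assms by linarith+
  ultimately show thesis
    by (intro that[of "?S 0 g1" "?S g1 g2" "?S (g1 + g2) g3" "?S s4 g4" "?S s5 g5"])
      (simp_all add: cyclic_interval_subset card_cyclic_interval cyclic_interval_shift Int_commute)
qed

lemma Un_interval_above: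
  fixes S :: "nat set"
  assumes "S \<subseteq> {..<T}" "T \<le> a" "a \<le> b" "b \<le> N"
  shows "S \<inter> {a..<b} = {}" "S \<union> {a..<b} \<subseteq> {..<N}" "card (S \<union> {a..<b}) = card S + (b - a)"
proof -
  show "S \<inter> {a..<b} = {}" "S \<union> {a..<b} \<subseteq> {..<N}" using assms by auto
  moreover have "finite S" using assms(1) by (rule finite_subset) simp
  ultimately show "card (S \<union> {a..<b}) = card S + (b - a)" by (simp add: card_Un_disjoint)
qed

lemma pentagon_set_coloring_with_overlaps:
  fixes N Z A X Y B RA RB :: nat
  assumes "RA \<le> A" "RA \<le> Y" "RB \<le> B" "RB \<le> X"
    and "Z + A + RB \<le> N" "A + X \<le> N" "X + Y \<le> N" "Y + B \<le> N" "B + Z + RA \<le> N"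
    and "Z + A + X + Y + B \<le> 2 * N"
  obtains CZ CA CX CY CB where
    "CZ \<subseteq> {..<N}" "CA \<subseteq> {..<N}" "CX \<subseteq> {..<N}" "CY \<subseteq> {..<N}" "CB \<subseteq> {..<N}"
    "card CZ = Z" "card CA = A" "card CX = X" "card CY = Y" "card CB = B"
    "CZ \<inter> CA = {}" "CA \<inter> CX = {}" "CX \<inter> CY = {}" "CY \<inter> CB = {}" "CB \<inter> CZ = {}"
    "RA \<le> card (CA \<inter> CY)" "RB \<le> card (CB \<inter> CX)"
proof -
  define T where "T = N - RA - RB"
  have "Z + (A - RA) \<le> T" "(A - RA) + (X - RB) \<le> T" "(X - RB) + (Y - RA) \<le> T"
    "(Y - RA) + (B - RB) \<le> T" "(B - RB) + Z \<le> T" "Z + (A - RA) + (X - RB) + (Y - RA) + (B - RB) \<le> 2 * T"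
    using assms unfolding T_def by linarith+
  then obtain SZ SA SX SY SB where S:
    "SZ \<subseteq> {..<T}" "SA \<subseteq> {..<T}" "SX \<subseteq> {..<T}" "SY \<subseteq> {..<T}" "SB \<subseteq> {..<T}"
    "card SZ = Z" "card SA = A - RA" "card SX = X - RB" "card SY = Y - RA" "card SB = B - RB"
    "SZ \<inter> SA = {}" "SA \<inter> SX = {}" "SX \<inter> SY = {}" "SY \<inter> SB = {}" "SB \<inter> SZ = {}"
    by (rule pentagon_set_coloring)
  \<comment> \<open>The colours above T form a block QA shared by A and Y and a block QB shared by B and X.\<close>
  define QA QB where "QA = {T..<T + RA}" and "QB = {T + RA..<N}"
  have N: "N = T + RA + RB" using assms unfolding T_def by linarith
  have blocks: "S' \<inter> QA = {}" "S' \<union> QA \<subseteq> {..<N}" "card (S' \<union> QA) = card S' + RA"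
    "S' \<inter> QB = {}" "S' \<union> QB \<subseteq> {..<N}" "card (S' \<union> QB) = card S' + RB" if "S' \<subseteq> {..<T}" for S'
    using Un_interval_above[OF that, of T "T + RA" N] Un_interval_above[OF that, of "T + RA" N N]
    unfolding QA_def QB_def N by auto
  have "finite QA" "finite QB" "card QA = RA" "card QB = RB" "QA \<inter> QB = {}"
    unfolding QA_def QB_def N by auto
  show thesis
  proof (rule that[of SZ "SA \<union> QA" "SX \<union> QB" "SY \<union> QA" "SB \<union> QB"])
    show "SZ \<subseteq> {..<N}" using S(1) N by auto
    show "SA \<union> QA \<subseteq> {..<N}" "SX \<union> QB \<subseteq> {..<N}" "SY \<union> QA \<subseteq> {..<N}" "SB \<union> QB \<subseteq> {..<N}"
      using blocks(2)[OF S(2)] blocks(5)[OF S(3)] blocks(2)[OF S(4)] blocks(5)[OF S(5)] .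
    show "card SZ = Z" "card (SA \<union> QA) = A" "card (SX \<union> QB) = X" "card (SY \<union> QA) = Y" "card (SB \<union> QB) = B"
      using blocks(3)[OF S(2)] blocks(6)[OF S(3)] blocks(3)[OF S(4)] blocks(6)[OF S(5)] S(6-10) assms(1-4)
      by simp_all
    have "QA \<subseteq> (SA \<union> QA) \<inter> (SY \<union> QA)" "QB \<subseteq> (SB \<union> QB) \<inter> (SX \<union> QB)" by blast+
    moreover have "finite ((SA \<union> QA) \<inter> (SY \<union> QA))" "finite ((SB \<union> QB) \<inter> (SX \<union> QB))"
      using S(2,3) \<open>finite QA\<close> \<open>finite QB\<close> by (auto intro: finite_subset)
    ultimately show "RA \<le> card ((SA \<union> QA) \<inter> (SY \<union> QA))" "RB \<le> card ((SB \<union> QB) \<inter> (SX \<union> QB))"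
      using card_mono \<open>card QA = RA\<close> \<open>card QB = RB\<close> by metis+
    show "SZ \<inter> (SA \<union> QA) = {}" using S(1,11) blocks(1) by blast
    show "(SA \<union> QA) \<inter> (SX \<union> QB) = {}" using S(2,3,12) blocks(1,4) \<open>QA \<inter> QB = {}\<close> by blast
    show "(SX \<union> QB) \<inter> (SY \<union> QA) = {}" using S(3,4,13) blocks(1,4) \<open>QA \<inter> QB = {}\<close> by blast
    show "(SY \<union> QA) \<inter> (SB \<union> QB) = {}" using S(4,5,14) blocks(1,4) \<open>QA \<inter> QB = {}\<close> by blast
    show "(SB \<union> QB) \<inter> SZ = {}" using S(1,5,15) blocks(4) by blast
  qed
qed

section \<open>Counting shared colours\<close>

lemma diff_mult_le_square:
  fixes y d w :: int
  assumes "w \<le> 4 * d" "0 \<le> w"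
  shows "(y - d) * w \<le> y * y"
proof -
  have "0 \<le> (2 * y - w)\<^sup>2" by simp
  moreover have "w * w \<le> 4 * d * w" using mult_right_mono[OF assms] .
  ultimately show ?thesis by (simp add: power2_eq_square algebra_simps)
qed

lemma shared_colors_bound_int:
  fixes y d w z b R :: int
  assumes "d < y" "y * R \<le> (y - d) * (w - z)" "0 \<le> z" "0 \<le> b"
    and "y + b \<le> w" "b + z \<le> w" "w \<le> 4 * d"
  shows "R \<le> y" "z + b + R \<le> w + d"
proof -
  have sq: "(y - d) * w \<le> y * y" using diff_mult_le_square assms by auto
  have "(y - d) * (w - z) \<le> (y - d) * w" using assms by (intro mult_left_mono) auto
  then have "y * R \<le> y * y" using assms(2) sq by linarith
  then show "R \<le> y" using assms by simp
  have "(y - d) * (w - z) \<le> y * (w + d - z - b)"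
  proof (cases "z \<le> y")
    case True
    have "d * z \<le> d * y" using True assms by (intro mult_left_mono) auto
    moreover have "y * (d + y - z) \<le> y * (w + d - z - b)" using assms by (intro mult_left_mono) auto
    ultimately show ?thesis using sq by (simp add: algebra_simps)
  next
    case False
    have "(y - d) * (w - z) \<le> (y - d) * (w - y)" using False assms by (intro mult_left_mono) auto
    moreover have "y * d \<le> y * (w + d - z - b)" using assms by (intro mult_left_mono) auto
    ultimately show ?thesis using sq by (simp add: algebra_simps)
  qed
  then have "y * R \<le> y * (w + d - z - b)" using assms(2) by linarith
  then show "z + b + R \<le> w + d" using assms by simp
qed

lemma mult_min_diff_le:
  fixes Y a d :: nat
  shows "Y * (min a Y - d) \<le> (Y - d) * a"
proof (cases "a \<le> Y")
  case True
  then have "Y * a - Y * d \<le> Y * a - a * d" by (simp add: diff_le_mono2)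
  then show ?thesis using True by (simp add: diff_mult_distrib2 diff_mult_distrib mult.commute)
next
  case False
  then show ?thesis by (simp add: mult.commute mult_right_mono)
qed

lemma shared_colors_bound:
  fixes a :: "'i \<Rightarrow> nat"
  assumes "finite I" "Z + sum a I \<le> w" "Y + B \<le> w" "Z + B \<le> w" "w \<le> 4 * d"
  shows "(\<Sum>i\<in>I. min (a i) Y - d) \<le> Y" "Z + B + (\<Sum>i\<in>I. min (a i) Y - d) \<le> w + d"
proof -
  let ?R = "\<Sum>i\<in>I. min (a i) Y - d"
  have "?R \<le> Y \<and> Z + B + ?R \<le> w + d"
  proof (cases "Y \<le> d")
    case True
    then show ?thesis using assms by simp
  next
    case False
    have "Y * ?R \<le> (Y - d) * sum a I"
      unfolding sum_distrib_left by (intro sum_mono mult_min_diff_le)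
    also have "\<dots> \<le> (Y - d) * (w - Z)" using assms(2) by (intro mult_left_mono) auto
    finally have "int (Y * ?R) \<le> int ((Y - d) * (w - Z))"
      by (simp only: of_nat_le_iff)
    then have "int Y * int ?R \<le> (int Y - int d) * (int w - int Z)"
      using False assms(2) by (simp only: of_nat_mult of_nat_diff)
    from shared_colors_bound_int[OF _ this, of "int B"] False assms show ?thesis
      by (auto simp del: of_nat_sum)
  qed
  then show "?R \<le> Y" "Z + B + ?R \<le> w + d" by auto
qed

lemma pendant_bound:
  fixes a u X Y w d :: nat
  assumes "a + u + X \<le> w" "X + Y + u \<le> w"
  shows "a - (min a Y - d) + X + Y + u \<le> w + d"
  using assms by (cases "a \<le> Y") (simp_all add: min_def)

section \<open>Colouring blowups of F_{k,l}\<close>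

lemma F_verts_iff:
  "VA i \<in> F_verts k l \<longleftrightarrow> i \<le> k" "VU i \<in> F_verts k l \<longleftrightarrow> 1 \<le> i \<and> i \<le> k"
  "VB j \<in> F_verts k l \<longleftrightarrow> j \<le> l" "VW j \<in> F_verts k l \<longleftrightarrow> 1 \<le> j \<and> j \<le> l"
  "VX \<in> F_verts k l" "VY \<in> F_verts k l" "VZ \<in> F_verts k l"
  by (auto simp: F_verts_def)

lemma finite_F_verts: "finite (F_verts k l)"
  by (simp add: F_verts_def)

lemma F_clique_weight_bounds:
  fixes q :: "fvert \<Rightarrow> nat"
  assumes clique: "\<forall>K. is_clique (F_verts k l) (F_edge k l) K \<longrightarrow> sum q K \<le> w"
  shows "q VZ + (\<Sum>i=0..k. q (VA i)) \<le> w" "q VX + (\<Sum>i=0..k. q (VA i)) \<le> w"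
    and "q VY + (\<Sum>j=0..l. q (VB j)) \<le> w" "q VZ + (\<Sum>j=0..l. q (VB j)) \<le> w"
    and "q VX + q VY \<le> w"
    and "\<And>i. i \<in> {1..k} \<Longrightarrow> q (VA i) + q (VU i) + q VX \<le> w"
    and "\<And>i. i \<in> {1..k} \<Longrightarrow> q VX + q VY + q (VU i) \<le> w"
    and "\<And>j. j \<in> {1..l} \<Longrightarrow> q (VB j) + q (VW j) + q VY \<le> w"
    and "\<And>j. j \<in> {1..l} \<Longrightarrow> q VX + q VY + q (VW j) \<le> w"
proof -
  have sum_insert_VA: "sum q (insert c (VA ` {0..k})) = q c + (\<Sum>i=0..k. q (VA i))"
    if "c \<in> {VX, VY, VZ}" for c
    using that by (subst sum.insert) (auto simp: sum.reindex inj_on_def)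
  have sum_insert_VB: "sum q (insert c (VB ` {0..l})) = q c + (\<Sum>j=0..l. q (VB j))"
    if "c \<in> {VX, VY, VZ}" for c
    using that by (subst sum.insert) (auto simp: sum.reindex inj_on_def)
  have clique_sum: "sum q K \<le> w" if "K \<subseteq> F_verts k l" "\<forall>u\<in>K. \<forall>v\<in>K. u \<noteq> v \<longrightarrow> F_edge k l u v" for K
    using clique that unfolding is_clique_def by blast
  have "VA ` {0..k} \<subseteq> F_verts k l" "VB ` {0..l} \<subseteq> F_verts k l"
    by (auto simp: F_verts_iff)
  then show "q VZ + (\<Sum>i=0..k. q (VA i)) \<le> w" "q VX + (\<Sum>i=0..k. q (VA i)) \<le> w"
    and "q VY + (\<Sum>j=0..l. q (VB j)) \<le> w" "q VZ + (\<Sum>j=0..l. q (VB j)) \<le> w"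
    using clique_sum[of "insert VZ (VA ` {0..k})"] clique_sum[of "insert VX (VA ` {0..k})"]
      clique_sum[of "insert VY (VB ` {0..l})"] clique_sum[of "insert VZ (VB ` {0..l})"]
      sum_insert_VA[of VZ] sum_insert_VA[of VX] sum_insert_VB[of VY] sum_insert_VB[of VZ]
    by (auto simp: F_edge_def F_verts_iff)
  show "q VX + q VY \<le> w"
    using clique_sum[of "{VX, VY}"] by (auto simp: F_edge_def F_verts_iff)
  show "q (VA i) + q (VU i) + q VX \<le> w" "q VX + q VY + q (VU i) \<le> w" if "i \<in> {1..k}" for i
    using that clique_sum[of "{VA i, VU i, VX}"] clique_sum[of "{VX, VY, VU i}"]
    by (auto simp: F_edge_def F_verts_iff add.assoc)
  show "q (VB j) + q (VW j) + q VY \<le> w" "q VX + q VY + q (VW j) \<le> w" if "j \<in> {1..l}" for j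
    using that clique_sum[of "{VB j, VW j, VY}"] clique_sum[of "{VX, VY, VW j}"]
    by (auto simp: F_edge_def F_verts_iff add.assoc)
qed

lemma F_frame_coloring:
  fixes q :: "fvert \<Rightarrow> nat"
  assumes "w \<le> N" "5 * w \<le> 4 * N"
    and clique: "\<forall>K. is_clique (F_verts k l) (F_edge k l) K \<longrightarrow> sum q K \<le> w"
  obtains CZ CA CX CY CB where
    "CZ \<subseteq> {..<N}" "CA \<subseteq> {..<N}" "CX \<subseteq> {..<N}" "CY \<subseteq> {..<N}" "CB \<subseteq> {..<N}"
    "card CZ = q VZ" "card CA = (\<Sum>i=0..k. q (VA i))" "card CX = q VX" "card CY = q VY"
    "card CB = (\<Sum>j=0..l. q (VB j))"
    "CZ \<inter> CA = {}" "CA \<inter> CX = {}" "CX \<inter> CY = {}" "CY \<inter> CB = {}" "CB \<inter> CZ = {}"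
    "(\<Sum>i=0..k. min (q (VA i)) (q VY) - (N - w)) \<le> card (CA \<inter> CY)"
    "(\<Sum>j=0..l. min (q (VB j)) (q VX) - (N - w)) \<le> card (CB \<inter> CX)"
proof -
  note w = F_clique_weight_bounds[OF clique]
  define d where "d = N - w"
  have N: "N = w + d" "w \<le> 4 * d" using assms(1,2) unfolding d_def by linarith+
  define A B where "A = (\<Sum>i=0..k. q (VA i))" and "B = (\<Sum>j=0..l. q (VB j))"
  define \<rho> where "\<rho> i = min (q (VA i)) (q VY) - d" for i
  define \<sigma> where "\<sigma> j = min (q (VB j)) (q VX) - d" for j
  have \<rho>: "sum \<rho> {0..k} \<le> q VY" "q VZ + B + sum \<rho> {0..k} \<le> N"
    using shared_colors_bound[where I="{0..k}" and a="\<lambda>i. q (VA i)" and Z="q VZ" and Y="q VY" and B=B]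
      w(1,3,4) N unfolding \<rho>_def A_def B_def by auto
  have \<sigma>: "sum \<sigma> {0..l} \<le> q VX" "q VZ + A + sum \<sigma> {0..l} \<le> N"
    using shared_colors_bound[where I="{0..l}" and a="\<lambda>j. q (VB j)" and Z="q VZ" and Y="q VX" and B=A]
      w(1,2,4) N unfolding \<sigma>_def A_def B_def by auto
  have le: "sum \<rho> {0..k} \<le> A" "sum \<sigma> {0..l} \<le> B"
    unfolding A_def B_def \<rho>_def \<sigma>_def by (simp_all add: sum_mono)
  have sums: "q VZ + A + sum \<sigma> {0..l} \<le> N" "A + q VX \<le> N" "q VX + q VY \<le> N" "q VY + B \<le> N"
    "B + q VZ + sum \<rho> {0..k} \<le> N" "q VZ + A + q VX + q VY + B \<le> 2 * N"
    using w(1-5) \<rho> \<sigma> assms(1,2) unfolding A_def B_def by linarith+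
  obtain CZ CA CX CY CB where
    "CZ \<subseteq> {..<N}" "CA \<subseteq> {..<N}" "CX \<subseteq> {..<N}" "CY \<subseteq> {..<N}" "CB \<subseteq> {..<N}"
    "card CZ = q VZ" "card CA = A" "card CX = q VX" "card CY = q VY" "card CB = B"
    "CZ \<inter> CA = {}" "CA \<inter> CX = {}" "CX \<inter> CY = {}" "CY \<inter> CB = {}" "CB \<inter> CZ = {}"
    "sum \<rho> {0..k} \<le> card (CA \<inter> CY)" "sum \<sigma> {0..l} \<le> card (CB \<inter> CX)"
    by (rule pentagon_set_coloring_with_overlaps[OF le(1) \<rho>(1) le(2) \<sigma>(1) sums])
  from this[unfolded \<rho>_def \<sigma>_def A_def B_def d_def] show thesis
    by (rule that)
qed

lemma F_core_coloring:
  fixes q :: "fvert \<Rightarrow> nat"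
  assumes "w \<le> N" "5 * w \<le> 4 * N"
    and clique: "\<forall>K. is_clique (F_verts k l) (F_edge k l) K \<longrightarrow> sum q K \<le> w"
  obtains PA PB CX CY CZ where
    "\<And>i. i \<le> k \<Longrightarrow> PA i \<subseteq> {..<N} \<and> card (PA i) = q (VA i)"
    "\<And>j. j \<le> l \<Longrightarrow> PB j \<subseteq> {..<N} \<and> card (PB j) = q (VB j)"
    "CX \<subseteq> {..<N}" "CY \<subseteq> {..<N}" "CZ \<subseteq> {..<N}"
    "card CX = q VX" "card CY = q VY" "card CZ = q VZ"
    "\<And>i j. i \<le> k \<Longrightarrow> j \<le> k \<Longrightarrow> i \<noteq> j \<Longrightarrow> PA i \<inter> PA j = {}"
    "\<And>i j. i \<le> l \<Longrightarrow> j \<le> l \<Longrightarrow> i \<noteq> j \<Longrightarrow> PB i \<inter> PB j = {}"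
    "\<And>i. i \<le> k \<Longrightarrow> PA i \<inter> (CX \<union> CZ) = {}"
    "\<And>j. j \<le> l \<Longrightarrow> PB j \<inter> (CY \<union> CZ) = {}"
    "CX \<inter> CY = {}"
    "\<And>i. i \<in> {1..k} \<Longrightarrow> card (PA i \<union> CX \<union> CY) + q (VU i) \<le> N"
    "\<And>j. j \<in> {1..l} \<Longrightarrow> card (PB j \<union> CX \<union> CY) + q (VW j) \<le> N"
proof -
  note w = F_clique_weight_bounds[OF clique]
  obtain CZ CA CX CY CB where frame:
    "CZ \<subseteq> {..<N}" "CA \<subseteq> {..<N}" "CX \<subseteq> {..<N}" "CY \<subseteq> {..<N}" "CB \<subseteq> {..<N}"
    "card CZ = q VZ" "card CA = (\<Sum>i=0..k. q (VA i))" "card CX = q VX" "card CY = q VY"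
    "card CB = (\<Sum>j=0..l. q (VB j))"
    "CZ \<inter> CA = {}" "CA \<inter> CX = {}" "CX \<inter> CY = {}" "CY \<inter> CB = {}" "CB \<inter> CZ = {}"
    "(\<Sum>i=0..k. min (q (VA i)) (q VY) - (N - w)) \<le> card (CA \<inter> CY)"
    "(\<Sum>j=0..l. min (q (VB j)) (q VX) - (N - w)) \<le> card (CB \<inter> CX)"
    using assms by (rule F_frame_coloring)
  have fin: "finite CA" "finite CB" using frame(2,5) by (auto intro: finite_subset)
  have shared_le: "min a Y - (N - w) \<le> a" for a Y :: nat by simp
  obtain PA where PA: "\<And>i. i \<in> {0..k} \<Longrightarrow> PA i \<subseteq> CA \<and> card (PA i) = q (VA i)
      \<and> card (PA i - CY) \<le> q (VA i) - (min (q (VA i)) (q VY) - (N - w))"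
    and PA_disj: "\<And>i j. i \<in> {0..k} \<Longrightarrow> j \<in> {0..k} \<Longrightarrow> i \<noteq> j \<Longrightarrow> PA i \<inter> PA j = {}"
    using obtain_disjoint_subsets_overlapping[OF finite_atLeastAtMost fin(1) shared_le frame(16)] frame(7)
    by auto
  obtain PB where PB: "\<And>j. j \<in> {0..l} \<Longrightarrow> PB j \<subseteq> CB \<and> card (PB j) = q (VB j)
      \<and> card (PB j - CX) \<le> q (VB j) - (min (q (VB j)) (q VX) - (N - w))"
    and PB_disj: "\<And>i j. i \<in> {0..l} \<Longrightarrow> j \<in> {0..l} \<Longrightarrow> i \<noteq> j \<Longrightarrow> PB i \<inter> PB j = {}"
    using obtain_disjoint_subsets_overlapping[OF finite_atLeastAtMost fin(2) shared_le frame(17)] frame(10)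
    by auto
  show thesis
  proof (rule that[of PA PB CX CY CZ])
    show "card (PA i \<union> CX \<union> CY) + q (VU i) \<le> N" if "i \<in> {1..k}" for i
      using PA[of i] that card_Un_le_card_Diff[where D=CY and P="PA i" and B=CX and C=CY] frame(8,9)
        w(6,7)[OF that] assms(1)
        pendant_bound[of "q (VA i)" "q (VU i)" "q VX" w "q VY" "N - w"] by fastforce
    show "card (PB j \<union> CX \<union> CY) + q (VW j) \<le> N" if "j \<in> {1..l}" for j
      using PB[of j] that card_Un_le_card_Diff[where D=CX and P="PB j" and B=CX and C=CY] frame(8,9)
        w(8,9)[OF that] assms(1)
        pendant_bound[of "q (VB j)" "q (VW j)" "q VY" w "q VX" "N - w"] by fastforce
    show "PA i \<subseteq> {..<N} \<and> card (PA i) = q (VA i)" "PA i \<inter> (CX \<union> CZ) = {}" if "i \<le> k" for i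
      using PA[of i] frame(2,11,12) that by auto
    show "PB j \<subseteq> {..<N} \<and> card (PB j) = q (VB j)" "PB j \<inter> (CY \<union> CZ) = {}" if "j \<le> l" for j
      using PB[of j] frame(5,14,15) that by auto
    show "PA i \<inter> PA j = {}" if "i \<le> k" "j \<le> k" "i \<noteq> j" for i j
      using PA_disj that by simp
    show "PB i \<inter> PB j = {}" if "i \<le> l" "j \<le> l" "i \<noteq> j" for i j
      using PB_disj that by simp
  qed (fact frame)+
qed

lemma F_weighted_coloring:
  fixes q :: "fvert \<Rightarrow> nat"
  assumes "w \<le> N" "5 * w \<le> 4 * N"
    and "\<forall>K. is_clique (F_verts k l) (F_edge k l) K \<longrightarrow> sum q K \<le> w"
  obtains C where "is_weighted_coloring (F_verts k l) (F_edge k l) N q C"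
proof -
  obtain PA PB CX CY CZ where
    PA: "\<And>i. i \<le> k \<Longrightarrow> PA i \<subseteq> {..<N} \<and> card (PA i) = q (VA i)" and
    PB: "\<And>j. j \<le> l \<Longrightarrow> PB j \<subseteq> {..<N} \<and> card (PB j) = q (VB j)" and
    C: "CX \<subseteq> {..<N}" "CY \<subseteq> {..<N}" "CZ \<subseteq> {..<N}" "card CX = q VX" "card CY = q VY" "card CZ = q VZ" and
    PA_disj: "\<And>i j. i \<le> k \<Longrightarrow> j \<le> k \<Longrightarrow> i \<noteq> j \<Longrightarrow> PA i \<inter> PA j = {}" and
    PB_disj: "\<And>i j. i \<le> l \<Longrightarrow> j \<le> l \<Longrightarrow> i \<noteq> j \<Longrightarrow> PB i \<inter> PB j = {}" and
    PA_XZ: "\<And>i. i \<le> k \<Longrightarrow> PA i \<inter> (CX \<union> CZ) = {}" and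
    PB_YZ: "\<And>j. j \<le> l \<Longrightarrow> PB j \<inter> (CY \<union> CZ) = {}" and
    XY: "CX \<inter> CY = {}" and
    room_U: "\<And>i. i \<in> {1..k} \<Longrightarrow> card (PA i \<union> CX \<union> CY) + q (VU i) \<le> N" and
    room_W: "\<And>j. j \<in> {1..l} \<Longrightarrow> card (PB j \<union> CX \<union> CY) + q (VW j) \<le> N"
    using assms by (rule F_core_coloring) blast
  obtain U where U: "\<And>i. i \<in> {1..k} \<Longrightarrow> U i \<subseteq> {..<N} \<and> U i \<inter> (PA i \<union> CX \<union> CY) = {} \<and> card (U i) = q (VU i)"
  proof (rule obtain_avoiding_subsets)
    show "finite (PA i \<union> CX \<union> CY)" "card (PA i \<union> CX \<union> CY) + q (VU i) \<le> N" if "i \<in> {1..k}" for i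
      using PA[of i] C(1,2) room_U that by (auto intro: finite_subset)
  qed blast
  obtain W where W: "\<And>j. j \<in> {1..l} \<Longrightarrow> W j \<subseteq> {..<N} \<and> W j \<inter> (PB j \<union> CX \<union> CY) = {} \<and> card (W j) = q (VW j)"
  proof (rule obtain_avoiding_subsets)
    show "finite (PB j \<union> CX \<union> CY)" "card (PB j \<union> CX \<union> CY) + q (VW j) \<le> N" if "j \<in> {1..l}" for j
      using PB[of j] C(1,2) room_W that by (auto intro: finite_subset)
  qed blast
  define C where "C h = (case h of VA i \<Rightarrow> PA i | VU i \<Rightarrow> U i | VB j \<Rightarrow> PB j | VW j \<Rightarrow> W j
    | VX \<Rightarrow> CX | VY \<Rightarrow> CY | VZ \<Rightarrow> CZ)" for h
  have size: "C h \<subseteq> {..<N} \<and> q h \<le> card (C h)" if "h \<in> F_verts k l" for h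
    using that PA PB C U W by (cases h) (auto simp: C_def F_verts_iff)
  have adj_disjoint:
    "\<And>i. i \<le> k \<Longrightarrow> CX \<inter> PA i = {}" "\<And>i. i \<le> k \<Longrightarrow> CZ \<inter> PA i = {}"
    "\<And>j. j \<le> l \<Longrightarrow> CY \<inter> PB j = {}" "\<And>j. j \<le> l \<Longrightarrow> CZ \<inter> PB j = {}"
    "\<And>i. 1 \<le> i \<Longrightarrow> i \<le> k \<Longrightarrow> PA i \<inter> U i = {} \<and> CX \<inter> U i = {} \<and> CY \<inter> U i = {}"
    "\<And>j. 1 \<le> j \<Longrightarrow> j \<le> l \<Longrightarrow> PB j \<inter> W j = {} \<and> CX \<inter> W j = {} \<and> CY \<inter> W j = {}"
    using PA_XZ PB_YZ U W by force+
  have "C h \<inter> C h' = {}" if "h \<in> F_verts k l" "h' \<in> F_verts k l" "F_adj0 h h'" for h h'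
    using that PA_disj PB_disj XY adj_disjoint
    by (cases h; cases h') (auto simp: C_def F_verts_iff)
  then have "C h \<inter> C h' = {}" if "h \<in> F_verts k l" "h' \<in> F_verts k l" "F_edge k l h h'" for h h'
    using that unfolding F_edge_def by (metis Int_commute)
  with size show thesis
    by (intro that[of C]) (auto simp: is_weighted_coloring_def)
qed

theorem theorem5p12:
  fixes k l :: nat and V :: "'v set" and E :: "'v \<Rightarrow> 'v \<Rightarrow> bool"
  assumes "finite V"
    and "is_blowup V E (F_verts k l) (F_edge k l)"
  shows "real (chromatic_number V E) \<le> of_int \<lceil>(5/4) * real (clique_number V E)\<rceil>"
proof -
  obtain f where fV: "\<forall>v\<in>V. f v \<in> F_verts k l"
    and blowup: "\<forall>u\<in>V. \<forall>v\<in>V. u \<noteq> v \<longrightarrow> (E u v \<longleftrightarrow> (f u = f v \<or> F_edge k l (f u) (f v)))"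
    using assms(2) unfolding is_blowup_def by blast
  define w where "w = clique_number V E"
  define N where "N = nat \<lceil>(5/4) * real w\<rceil>"
  have "(5/4) * real w \<le> real N" unfolding N_def by linarith
  then have "w \<le> N" "5 * w \<le> 4 * N" by linarith+
  moreover have "\<forall>K. is_clique (F_verts k l) (F_edge k l) K \<longrightarrow> (\<Sum>h\<in>K. card {v\<in>V. f v = h}) \<le> w"
    using blowup_clique_weight_le[OF assms(1) finite_F_verts blowup] unfolding w_def by blast
  ultimately obtain C where "is_weighted_coloring (F_verts k l) (F_edge k l) N (\<lambda>h. card {v\<in>V. f v = h}) C"
    by (rule F_weighted_coloring)
  with assms(1) fV blowup have "chromatic_number V E \<le> N"
    by (rule blowup_chromatic_number_le)
  then have "real (chromatic_number V E) \<le> real N" by simp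
  also have "\<dots> = of_int \<lceil>(5/4) * real w\<rceil>" unfolding N_def by simp
  finally show ?thesis unfolding w_def .
qed

end
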